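(* Consider the safety strategy-improvement algorithm described in the context, run on a concurrent game structure $G$ with safe set $F$, and let $v_i=\mathrm{val}_1^{\overline{\gamma}_i}(\mathrm{Safe}(F))$ be the valuation at iteration $i$. If $I=\{s\in S\setminus(W_1\cup T):\mathrm{Pre}_1(v_i)(s)>v_i(s)\}=\emptyset$ and $(\overline{A}_i\cap S)\setminus W_1=\emptyset$, then $\overline{\gamma}_i$ is an optimal strategy and $v_i=\mathrm{val}_1(\mathrm{Safe}(F))$.
   Context: Concurrent game structure $G=(S,M,\Gamma_1,\Gamma_2,\delta)$: finite states $S$, finite moves $M$, nonempty move sets $\Gamma_i(s)\subseteq M$, $\delta(s,a_1,a_2)\in\mathrm{Distr}(S)$ (simultaneous independent moves); $\mathrm{Dest}(s,a_1,a_2)=\mathrm{supp}\,\delta(s,a_1,a_2)$. A state is absorbing if every move pair leads back to it with probability 1. A selector for player $i$ assigns to each state $s$ a distribution on $\Gamma_i(s)$ (a selector at $s$ is such a distribution); $\overline{\xi}$ is the memoryless strategy playing $\xi$ forever. $\mathrm{Safe}(F)$ is the set of plays that stay in $F$ forever; $\mathrm{val}_1^{\pi_1}(\mathrm{Safe}(F))(s)=\inf_{\pi_2}\Pr_s^{\pi_1,\pi_2}(\mathrm{Safe}(F))$, $\mathrm{val}_1(\mathrm{Safe}(F))=\sup_{\pi_1}\mathrm{val}_1^{\pi_1}(\mathrm{Safe}(F))$ (over all strategies); $\pi_1$ is optimal if $\mathrm{val}_1^{\pi_1}=\mathrm{val}_1$. For a valuation $v:S\to[0,1]$ and selectors: $\mathrm{Pre}_{\xi_1,\xi_2}(v)(s)=\sum_{a,b}\sum_t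 v(t)\delta(s,a,b)(t)\xi_1(s)(a)\xi_2(s)(b)$; $\mathrm{Pre}_{\xi_1,b}$ uses the point mass on move $b$ for player 2; $\mathrm{Pre}_{1:\xi_1}(v)(s)=\inf_{\xi_2}\mathrm{Pre}_{\xi_1,\xi_2}(v)(s)$; $\mathrm{Pre}_1(v)(s)=\sup_{\xi_1}\mathrm{Pre}_{1:\xi_1}(v)(s)$. Let $T=S\setminus F$ and $W_1=\{s:\mathrm{val}_1(\mathrm{Safe}(F))(s)=1\}$; standing assumption: all states of $W_1\cup T$ are absorbing. $\mathrm{OptSel}(v,s)=\{\xi_1\text{ selector at }s:\mathrm{Pre}_{1:\xi_1}(v)(s)=\mathrm{Pre}_1(v)(s)\}$; for $\xi_1\in\mathrm{OptSel}(v,s)$, $\mathrm{CountOpt}(v,s,\xi_1)=\{b\in\Gamma_2(s):\mathrm{Pre}_{\xi_1,b}(v)(s)=\mathrm{Pre}_1(v)(s)\}$; $\mathrm{OptSelCount}(v,s)$ is the set of pairs $(A,B)$ with $A\subseteq\Gamma_1(s)$, $B\subseteq\Gamma_2(s)$ such that some $\xi_1\in\mathrm{OptSel}(v,s)$ has support $A$ and $\mathrm{CountOpt}(v,s,\xi_1)=B$. Turn-based reduction $\mathrm{TB}(G,v,F)=(\overline{G}_v,\overline{F})$: a turn-based stochastic game with player-1 states $S$, player-2 states $(s,A,B)$ for $(A,B)\in\mathrm{OptSelCount}(v,s)$, random states $(s,A,b)$ for such $(A,B)$ and $b\in B$; edges $s\to(s,A,B)$, $(s,A,B)\to(s,A,b)$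 for $b\in B$, and $(s,A,b)\to t$ for $t\in\bigcup_{a\in A}\mathrm{Dest}(s,a,b)$; player $i$ picks the successor at its states, random states choose uniformly among successors. $\overline{F}=F\cup\{(s,A,B):s\in F\}\cup\{(s,A,b):s\in F\}$. The almost-sure winning states for $\mathrm{Safe}(\overline{F})$ are those from which player 1 can ensure $\mathrm{Safe}(\overline{F})$ with probability 1 against all player-2 strategies. Algorithm: $\gamma_0=\xi^{\mathrm{unif}}$ (uniform over $\Gamma_1(s)$ at every $s$); $v_i=\mathrm{val}_1^{\overline{\gamma}_i}(\mathrm{Safe}(F))$. At iteration $i$: let $I=\{s\in S\setminus(W_1\cup T):\mathrm{Pre}_1(v_i)(s)>v_i(s)\}$. If $I\ne\emptyset$: take a selector $\xi_1$ with $\mathrm{Pre}_{1:\xi_1}(v_i)(s)=\mathrm{Pre}_1(v_i)(s)$ for $s\in I$ and let $\gamma_{i+1}=\xi_1$ on $I$, $=\gamma_i$ elsewhere. Otherwise: compute $(\overline{G}_{v_i},\overline{F})=\mathrm{TB}(G,v_i,F)$, the set $\overline{A}_i$ of almost-sure winning states for $\mathrm{Safe}(\overline{F})$ in $\overline{G}_{v_i}$, and a pure memoryless almost-sure winning strategy $\overline{\pi}_1$ from $\overline{A}_i$; let $U=(\overline{A}_i\cap S)\setminus W_1$; if $U\ne\emptyset$, let $\gamma_{i+1}=\gamma_i$ outside $U$ and, for $s\in U$ with $\overline{\pi}_1(s)=(s,A,B)$, let $\gamma_{i+1}(s)$ be a selector $\xi\in\mathrm{OptSel}(v_i,s)$ with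 support $A$ and $\mathrm{CountOpt}(v_i,s,\xi)=B$. The algorithm stops when $I=\emptyset$ and $U=\emptyset$. *)

theory Defs
  imports "HOL-Probability.Probability"
begin

record ('s, 'm) cgs =
  mv1 :: "'s \<Rightarrow> 'm set"
  mv2 :: "'s \<Rightarrow> 'm set"
  trans :: "'s \<Rightarrow> 'm \<Rightarrow> 'm \<Rightarrow> 's pmf"

definition Dest :: "('s, 'm) cgs \<Rightarrow> 's \<Rightarrow> 'm \<Rightarrow> 'm \<Rightarrow> 's set" where
  "Dest G s a b = set_pmf (trans G s a b)"

definition absorbing :: "('s, 'm) cgs \<Rightarrow> 's \<Rightarrow> bool" where
  "absorbing G s \<longleftrightarrow> (\<forall>a\<in>mv1 G s. \<forall>b\<in>mv2 G s. trans G s a b = return_pmf s)"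

text \<open>Given a next-state kernel on histories (finite nonempty lists of states),
  the probability that the first n+1 states of the play all satisfy P.\<close>
primrec safe_prob_n :: "('q \<Rightarrow> bool) \<Rightarrow> ('q list \<Rightarrow> 'q pmf) \<Rightarrow> nat \<Rightarrow> 'q list \<Rightarrow> real" where
  "safe_prob_n P K 0 h = (if P (last h) then 1 else 0)"
| "safe_prob_n P K (Suc n) h =
     (if P (last h) then measure_pmf.expectation (K h) (\<lambda>t. safe_prob_n P K n (h @ [t])) else 0)"

text \<open>Probability of the event Safe (stay in P forever) from initial state q: by continuity of
  the play measure, the limit (infimum) of the decreasing finite-horizon cylinder probabilities.\<close>
definition prob_safe :: "('q \<Rightarrow> bool) \<Rightarrow> ('q list \<Rightarrow> 'q pmf) \<Rightarrow> 'q \<Rightarrow> real" where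
  "prob_safe P K q = (INF n. safe_prob_n P K n [q])"

definition strat :: "('s \<Rightarrow> 'm set) \<Rightarrow> ('s list \<Rightarrow> 'm pmf) \<Rightarrow> bool" where
  "strat Gam \<pi> \<longleftrightarrow> (\<forall>h. h \<noteq> [] \<longrightarrow> set_pmf (\<pi> h) \<subseteq> Gam (last h))"

definition cgs_kernel :: "('s, 'm) cgs \<Rightarrow> ('s list \<Rightarrow> 'm pmf) \<Rightarrow> ('s list \<Rightarrow> 'm pmf) \<Rightarrow> 's list \<Rightarrow> 's pmf" where
  "cgs_kernel G \<pi>1 \<pi>2 h =
     bind_pmf (\<pi>1 h) (\<lambda>a. bind_pmf (\<pi>2 h) (\<lambda>b. trans G (last h) a b))"

definition val1_strat :: "('s, 'm) cgs \<Rightarrow> 's set \<Rightarrow> ('s list \<Rightarrow> 'm pmf) \<Rightarrow> 's \<Rightarrow> real" where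
  "val1_strat G F \<pi>1 s = (INF \<pi>2 \<in> {\<pi>2. strat (mv2 G) \<pi>2}. prob_safe (\<lambda>t. t \<in> F) (cgs_kernel G \<pi>1 \<pi>2) s)"

definition val1 :: "('s, 'm) cgs \<Rightarrow> 's set \<Rightarrow> 's \<Rightarrow> real" where
  "val1 G F s = (SUP \<pi>1 \<in> {\<pi>1. strat (mv1 G) \<pi>1}. val1_strat G F \<pi>1 s)"

definition optimal1 :: "('s, 'm) cgs \<Rightarrow> 's set \<Rightarrow> ('s list \<Rightarrow> 'm pmf) \<Rightarrow> bool" where
  "optimal1 G F \<pi>1 \<longleftrightarrow> strat (mv1 G) \<pi>1 \<and> val1_strat G F \<pi>1 = val1 G F"

definition selector :: "('s \<Rightarrow> 'm set) \<Rightarrow> ('s \<Rightarrow> 'm pmf) \<Rightarrow> bool" where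
  "selector Gam \<xi> \<longleftrightarrow> (\<forall>s. set_pmf (\<xi> s) \<subseteq> Gam s)"

definition sel_at :: "('s \<Rightarrow> 'm set) \<Rightarrow> 's \<Rightarrow> 'm pmf set" where
  "sel_at Gam s = {x. set_pmf x \<subseteq> Gam s}"

definition memoryless :: "('s \<Rightarrow> 'm pmf) \<Rightarrow> 's list \<Rightarrow> 'm pmf" where
  "memoryless \<xi> h = \<xi> (last h)"

definition W1 :: "('s, 'm) cgs \<Rightarrow> 's set \<Rightarrow> 's set" where
  "W1 G F = {s. val1 G F s = 1}"

definition Pre_sel :: "('s::finite, 'm::finite) cgs \<Rightarrow> ('s \<Rightarrow> real) \<Rightarrow> 'm pmf \<Rightarrow> 'm pmf \<Rightarrow> 's \<Rightarrow> real" where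
  "Pre_sel G v x1 x2 s =
     (\<Sum>a\<in>UNIV. \<Sum>b\<in>UNIV. \<Sum>t\<in>UNIV. v t * pmf (trans G s a b) t * pmf x1 a * pmf x2 b)"

definition Pre1_fix :: "('s::finite, 'm::finite) cgs \<Rightarrow> ('s \<Rightarrow> real) \<Rightarrow> 'm pmf \<Rightarrow> 's \<Rightarrow> real" where
  "Pre1_fix G v x1 s = (INF x2 \<in> sel_at (mv2 G) s. Pre_sel G v x1 x2 s)"

definition Pre1 :: "('s::finite, 'm::finite) cgs \<Rightarrow> ('s \<Rightarrow> real) \<Rightarrow> 's \<Rightarrow> real" where
  "Pre1 G v s = (SUP x1 \<in> sel_at (mv1 G) s. Pre1_fix G v x1 s)"

definition OptSel :: "('s::finite, 'm::finite) cgs \<Rightarrow> ('s \<Rightarrow> real) \<Rightarrow> 's \<Rightarrow> 'm pmf set" where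
  "OptSel G v s = {x1 \<in> sel_at (mv1 G) s. Pre1_fix G v x1 s = Pre1 G v s}"

definition CountOpt :: "('s::finite, 'm::finite) cgs \<Rightarrow> ('s \<Rightarrow> real) \<Rightarrow> 's \<Rightarrow> 'm pmf \<Rightarrow> 'm set" where
  "CountOpt G v s x1 = {b \<in> mv2 G s. Pre_sel G v x1 (return_pmf b) s = Pre1 G v s}"

definition OptSelCount :: "('s::finite, 'm::finite) cgs \<Rightarrow> ('s \<Rightarrow> real) \<Rightarrow> 's \<Rightarrow> ('m set \<times> 'm set) set" where
  "OptSelCount G v s =
     {(A, B). A \<subseteq> mv1 G s \<and> B \<subseteq> mv2 G s \<and>
        (\<exists>x1\<in>OptSel G v s. set_pmf x1 = A \<and> CountOpt G v s x1 = B)}"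

datatype ('s, 'm) tbst = TB1 's | TB2 's "'m set" "'m set" | TBR 's "'m set" 'm

fun tb_base :: "('s, 'm) tbst \<Rightarrow> 's" where
  "tb_base (TB1 s) = s"
| "tb_base (TB2 s A B) = s"
| "tb_base (TBR s A b) = s"

definition tb_states :: "('s::finite, 'm::finite) cgs \<Rightarrow> ('s \<Rightarrow> real) \<Rightarrow> ('s, 'm) tbst set" where
  "tb_states G v =
     range TB1
     \<union> {TB2 s A B | s A B. (A, B) \<in> OptSelCount G v s}
     \<union> {TBR s A b | s A B b. (A, B) \<in> OptSelCount G v s \<and> b \<in> B}"

fun tb_succ :: "('s::finite, 'm::finite) cgs \<Rightarrow> ('s \<Rightarrow> real) \<Rightarrow> ('s, 'm) tbst \<Rightarrow> ('s, 'm) tbst set" where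
  "tb_succ G v (TB1 s) = {TB2 s A B | A B. (A, B) \<in> OptSelCount G v s}"
| "tb_succ G v (TB2 s A B) = {TBR s A b | b. b \<in> B}"
| "tb_succ G v (TBR s A b) = TB1 ` (\<Union>a\<in>A. Dest G s a b)"

definition tb_safe :: "'s set \<Rightarrow> ('s, 'm) tbst \<Rightarrow> bool" where
  "tb_safe F q \<longleftrightarrow> tb_base q \<in> F"

definition is_p1 :: "('s, 'm) tbst \<Rightarrow> bool" where
  "is_p1 q \<longleftrightarrow> (\<exists>s. q = TB1 s)"

definition is_p2 :: "('s, 'm) tbst \<Rightarrow> bool" where
  "is_p2 q \<longleftrightarrow> (\<exists>s A B. q = TB2 s A B)"

definition tb_strat1 :: "('s::finite, 'm::finite) cgs \<Rightarrow> ('s \<Rightarrow> real) \<Rightarrow> (('s, 'm) tbst list \<Rightarrow> ('s, 'm) tbst pmf) \<Rightarrow> bool" where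
  "tb_strat1 G v \<pi> \<longleftrightarrow> (\<forall>h. h \<noteq> [] \<longrightarrow> last h \<in> tb_states G v \<longrightarrow> is_p1 (last h)
      \<longrightarrow> set_pmf (\<pi> h) \<subseteq> tb_succ G v (last h))"

definition tb_strat2 :: "('s::finite, 'm::finite) cgs \<Rightarrow> ('s \<Rightarrow> real) \<Rightarrow> (('s, 'm) tbst list \<Rightarrow> ('s, 'm) tbst pmf) \<Rightarrow> bool" where
  "tb_strat2 G v \<pi> \<longleftrightarrow> (\<forall>h. h \<noteq> [] \<longrightarrow> last h \<in> tb_states G v \<longrightarrow> is_p2 (last h)
      \<longrightarrow> set_pmf (\<pi> h) \<subseteq> tb_succ G v (last h))"

definition tb_kernel :: "('s::finite, 'm::finite) cgs \<Rightarrow> ('s \<Rightarrow> real)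
    \<Rightarrow> (('s, 'm) tbst list \<Rightarrow> ('s, 'm) tbst pmf) \<Rightarrow> (('s, 'm) tbst list \<Rightarrow> ('s, 'm) tbst pmf)
    \<Rightarrow> ('s, 'm) tbst list \<Rightarrow> ('s, 'm) tbst pmf" where
  "tb_kernel G v \<pi>1 \<pi>2 h =
     (case last h of
        TB1 _ \<Rightarrow> \<pi>1 h
      | TB2 _ _ _ \<Rightarrow> \<pi>2 h
      | TBR _ _ _ \<Rightarrow> pmf_of_set (tb_succ G v (last h)))"

definition tb_as_win :: "('s::finite, 'm::finite) cgs \<Rightarrow> ('s \<Rightarrow> real) \<Rightarrow> 's set \<Rightarrow> ('s, 'm) tbst set" where
  "tb_as_win G v F =
     {q \<in> tb_states G v. \<exists>\<pi>1. tb_strat1 G v \<pi>1 \<and>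
        (\<forall>\<pi>2. tb_strat2 G v \<pi>2 \<longrightarrow> prob_safe (tb_safe F) (tb_kernel G v \<pi>1 \<pi>2) q = 1)}"

definition unif_sel :: "('s, 'm) cgs \<Rightarrow> 's \<Rightarrow> 'm pmf" where
  "unif_sel G s = pmf_of_set (mv1 G s)"

abbreviation vals :: "('s::finite, 'm::finite) cgs \<Rightarrow> 's set \<Rightarrow> ('s \<Rightarrow> 'm pmf) \<Rightarrow> 's \<Rightarrow> real" where
  "vals G F \<gamma> \<equiv> val1_strat G F (memoryless \<gamma>)"

definition Iset :: "('s::finite, 'm::finite) cgs \<Rightarrow> 's set \<Rightarrow> ('s \<Rightarrow> 'm pmf) \<Rightarrow> 's set" where
  "Iset G F \<gamma> = {s. s \<notin> W1 G F \<union> (- F) \<and> Pre1 G (vals G F \<gamma>) s > vals G F \<gamma> s}"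

text \<open>U = (A-bar_i \<inter> S) minus W1, where S is identified with the player-1 states TB1 s.\<close>
definition Uset :: "('s::finite, 'm::finite) cgs \<Rightarrow> 's set \<Rightarrow> ('s \<Rightarrow> 'm pmf) \<Rightarrow> 's set" where
  "Uset G F \<gamma> = {s. TB1 s \<in> tb_as_win G (vals G F \<gamma>) F} - W1 G F"

text \<open>One iteration of the algorithm (a relation, since the choices of selectors and of the
  pure memoryless almost-sure winning strategy are nondeterministic).\<close>
definition alg_step :: "('s::finite, 'm::finite) cgs \<Rightarrow> 's set \<Rightarrow> ('s \<Rightarrow> 'm pmf) \<Rightarrow> ('s \<Rightarrow> 'm pmf) \<Rightarrow> bool" where
  "alg_step G F \<gamma> \<gamma>' \<longleftrightarrow>
     (let v = vals G F \<gamma>; I = Iset G F \<gamma> in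
      (I \<noteq> {} \<and>
        (\<exists>\<xi>1. selector (mv1 G) \<xi>1 \<and> (\<forall>s\<in>I. Pre1_fix G v (\<xi>1 s) s = Pre1 G v s) \<and>
              \<gamma>' = (\<lambda>s. if s \<in> I then \<xi>1 s else \<gamma> s)))
    \<or> (I = {} \<and> Uset G F \<gamma> \<noteq> {} \<and>
        (\<exists>\<pi>b :: ('s, 'm) tbst \<Rightarrow> ('s, 'm) tbst.
           (\<forall>s. \<pi>b (TB1 s) \<in> tb_succ G v (TB1 s)) \<and>
           (\<forall>q\<in>tb_as_win G v F. \<forall>\<pi>2. tb_strat2 G v \<pi>2 \<longrightarrow>
               prob_safe (tb_safe F) (tb_kernel G v (\<lambda>h. return_pmf (\<pi>b (last h))) \<pi>2) q = 1) \<and>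
           (\<forall>s. s \<notin> Uset G F \<gamma> \<longrightarrow> \<gamma>' s = \<gamma> s) \<and>
           (\<forall>s\<in>Uset G F \<gamma>. \<forall>A B. \<pi>b (TB1 s) = TB2 s A B \<longrightarrow>
               \<gamma>' s \<in> OptSel G v s \<and> set_pmf (\<gamma>' s) = A \<and> CountOpt G v s (\<gamma>' s) = B))))"

inductive alg_iter :: "('s::finite, 'm::finite) cgs \<Rightarrow> 's set \<Rightarrow> nat \<Rightarrow> ('s \<Rightarrow> 'm pmf) \<Rightarrow> bool"
  for G F where
  init: "alg_iter G F 0 (unif_sel G)"
| step: "alg_iter G F i \<gamma> \<Longrightarrow> alg_step G F \<gamma> \<gamma>' \<Longrightarrow> alg_iter G F (Suc i) \<gamma>'"

end

theory Submission
  imports Defs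
begin

text \<open>The value v of the memoryless strategy is below the game value w = val1 G F. If v < w
  somewhere, let Z be the set where the gap w - v attains its maximum c > 0. Both values are 0
  outside F and 1 on the (absorbing) states of W1, so Z \<subseteq> F - W1, and there Pre1 v \<le> v since I is
  empty. A one-step argument gives w \<le> Pre1 w; so at u \<in> Z a selector attaining Pre1 w u is
  optimal for v, and averaging the gap shows that its v-optimal counter moves lead only back
  into Z. Choosing these selectors in TB(G,v,F) therefore keeps the play in Z \<subseteq> F forever, which
  puts Z into U = \<emptyset>.\<close>

lemma sum_pmf_UNIV: "(\<Sum>a\<in>UNIV. pmf (x::'m::finite pmf) a) = 1"
  by (rule sum_pmf_eq_1) auto

lemma expectation_finite:
  "measure_pmf.expectation (p::'s::finite pmf) f = (\<Sum>t\<in>UNIV. f t * pmf p t)"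
  by (simp add: integral_measure_pmf_real[where A=UNIV])

lemma pmf_bind_finite:
  "pmf (bind_pmf (x::'m::finite pmf) f) t = (\<Sum>a\<in>UNIV. pmf (f a) t * pmf x a)"
  by (simp add: pmf_bind integral_measure_pmf_real[where A=UNIV])

lemma pmf_average_le:
  assumes "\<And>u. u \<in> set_pmf q \<Longrightarrow> d u \<le> (c::real)"
  shows "(\<Sum>u\<in>UNIV. d u * pmf (q::'s::finite pmf) u) \<le> c"
proof -
  have "(\<Sum>u\<in>UNIV. d u * pmf q u) \<le> (\<Sum>u\<in>UNIV. c * pmf q u)"
  proof (rule sum_mono)
    fix u
    show "d u * pmf q u \<le> c * pmf q u"
      by (cases "u \<in> set_pmf q") (auto simp: assms mult_right_mono set_pmf_iff)
  qed
  then show ?thesis by (simp add: sum_distrib_left[symmetric] sum_pmf_UNIV)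
qed

lemma pmf_average_ge:
  assumes "\<And>u. u \<in> set_pmf q \<Longrightarrow> (c::real) \<le> d u"
  shows "c \<le> (\<Sum>u\<in>UNIV. d u * pmf (q::'s::finite pmf) u)"
  using pmf_average_le[of q "\<lambda>u. - d u" "- c"] assms by (simp add: sum_negf)

lemma pmf_average_eq_bound:
  assumes "\<And>u. d u \<le> (c::real)" "c \<le> (\<Sum>u\<in>UNIV. d u * pmf (q::'s::finite pmf) u)"
    and "u \<in> set_pmf q"
  shows "d u = c"
proof -
  have nn: "\<And>u. 0 \<le> (c - d u) * pmf q u" using assms(1) by simp
  have "(\<Sum>u\<in>UNIV. (c - d u) * pmf q u) = c - (\<Sum>u\<in>UNIV. d u * pmf q u)"
    by (simp add: left_diff_distrib sum_subtractf sum_distrib_left[symmetric] sum_pmf_UNIV)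
  moreover have "0 \<le> (\<Sum>u\<in>UNIV. (c - d u) * pmf q u)"
    by (rule sum_nonneg) (rule nn)
  ultimately have "(\<Sum>u\<in>UNIV. (c - d u) * pmf q u) = 0"
    using assms(2) by linarith
  then have "(c - d u) * pmf q u = 0" using nn by (simp add: sum_nonneg_eq_0_iff)
  then show ?thesis using pmf_positive[OF assms(3)] by simp
qed

lemma expectation_unit_interval:
  assumes "\<And>x. 0 \<le> f x" "\<And>x. f x \<le> (1::real)"
  shows "integrable (measure_pmf p) f"
    and "0 \<le> measure_pmf.expectation p f" and "measure_pmf.expectation p f \<le> 1"
proof -
  show int: "integrable (measure_pmf p) f"
    by (rule measure_pmf.integrable_const_bound[where B=1]) (use assms in auto)
  show "0 \<le> measure_pmf.expectation p f"
    using assms by (auto intro: integral_nonneg_AE)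
  have "measure_pmf.expectation p f \<le> measure_pmf.expectation p (\<lambda>_. 1)"
    by (rule integral_mono[OF int]) (use assms in auto)
  then show "measure_pmf.expectation p f \<le> 1" by simp
qed

lemma safe_prob_n_bounds: "0 \<le> safe_prob_n P K n h" "safe_prob_n P K n h \<le> 1"
  by (induction n arbitrary: h) (auto intro: expectation_unit_interval)

lemma safe_prob_n_Suc_le: "safe_prob_n P K (Suc n) h \<le> safe_prob_n P K n h"
proof (induction n arbitrary: h)
  case 0
  then show ?case by (auto intro: expectation_unit_interval)
next
  case (Suc n)
  have "measure_pmf.expectation (K h) (\<lambda>t. safe_prob_n P K (Suc n) (h @ [t]))
     \<le> measure_pmf.expectation (K h) (\<lambda>t. safe_prob_n P K n (h @ [t]))"
    by (rule integral_mono) (auto intro!: expectation_unit_interval Suc.IH safe_prob_n_bounds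
        simp del: safe_prob_n.simps)
  then show ?case by (simp only: safe_prob_n.simps(2)[of P K "Suc n"] safe_prob_n.simps(2)[of P K n]) simp
qed

lemma bdd_below_safe_prob_n: "bdd_below (range (\<lambda>n. safe_prob_n P K n h))"
  by (rule bdd_belowI[where m=0]) (auto simp: safe_prob_n_bounds)

lemma prob_safe_le_safe_prob_n: "prob_safe P K q \<le> safe_prob_n P K n [q]"
  unfolding prob_safe_def by (rule cINF_lower[OF bdd_below_safe_prob_n]) simp

lemma prob_safe_nonneg [simp]: "0 \<le> prob_safe P K q"
  unfolding prob_safe_def by (rule cINF_greatest) (auto simp: safe_prob_n_bounds)

lemma prob_safe_le_1 [simp]: "prob_safe P K q \<le> 1"
  using prob_safe_le_safe_prob_n[of P K q 0] safe_prob_n_bounds(2)[of P K 0 "[q]"] by linarith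

lemma safe_prob_n_tendsto_prob_safe: "(\<lambda>n. safe_prob_n P K n [q]) \<longlonglongrightarrow> prob_safe P K q"
  unfolding prob_safe_def
  by (rule LIMSEQ_decseq_INF[OF bdd_below_safe_prob_n]) (rule decseq_SucI, rule safe_prob_n_Suc_le)

lemma prob_safe_unsafe: "\<not> P q \<Longrightarrow> prob_safe P K q = 0"
  using prob_safe_le_safe_prob_n[of P K q 0] prob_safe_nonneg[of P K q] by simp

lemma prob_safe_invariant:
  assumes closed: "\<And>h. h \<noteq> [] \<Longrightarrow> last h \<in> S \<Longrightarrow> set_pmf (K h) \<subseteq> S"
    and safe: "\<And>x. x \<in> S \<Longrightarrow> P x" and "q \<in> S"
  shows "prob_safe P K q = 1"
proof -
  have "safe_prob_n P K n h = 1" if "h \<noteq> []" "last h \<in> S" for n h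
    using that
  proof (induction n arbitrary: h)
    case 0
    then show ?case using safe by simp
  next
    case (Suc n)
    have "measure_pmf.expectation (K h) (\<lambda>t. safe_prob_n P K n (h @ [t]))
        = measure_pmf.expectation (K h) (\<lambda>_. 1)"
      using closed[OF Suc.prems] Suc.IH
      by (intro integral_cong_AE) (auto simp: AE_measure_pmf_iff)
    then show ?case using Suc.prems safe by simp
  qed
  then show ?thesis unfolding prob_safe_def using \<open>q \<in> S\<close> by simp
qed

lemma safe_prob_n_Cons_shift:
  assumes "\<And>g. K (s # t # g) = K' (t # g)"
  shows "safe_prob_n P K n (s # t # g) = safe_prob_n P K' n (t # g)"
  by (induction n arbitrary: g) (simp_all add: assms)

lemma prob_safe_first_step_le:
  fixes s :: "'s::finite"
  assumes "\<And>t g. K (s # t # g) = K' t (t # g)"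
  shows "prob_safe P K s \<le> (\<Sum>t\<in>UNIV. prob_safe P (K' t) t * pmf (K [s]) t)"
proof (rule LIMSEQ_le_const)
  show "(\<lambda>n. \<Sum>t\<in>UNIV. safe_prob_n P (K' t) n [t] * pmf (K [s]) t)
      \<longlonglongrightarrow> (\<Sum>t\<in>UNIV. prob_safe P (K' t) t * pmf (K [s]) t)"
    by (intro tendsto_sum tendsto_mult_right safe_prob_n_tendsto_prob_safe)
  have "prob_safe P K s \<le> (\<Sum>t\<in>UNIV. safe_prob_n P (K' t) n [t] * pmf (K [s]) t)" for n
  proof -
    have "safe_prob_n P K (Suc n) [s] \<le> (\<Sum>t\<in>UNIV. safe_prob_n P (K' t) n [t] * pmf (K [s]) t)"
      using safe_prob_n_Cons_shift[of K s _ "K' _" P n "[]"] assms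
      by (auto simp: expectation_finite safe_prob_n_bounds intro: sum_nonneg)
    then show ?thesis using prob_safe_le_safe_prob_n[of P K s "Suc n"] by linarith
  qed
  then show "\<exists>N. \<forall>n\<ge>N. prob_safe P K s \<le> (\<Sum>t\<in>UNIV. safe_prob_n P (K' t) n [t] * pmf (K [s]) t)"
    by blast
qed

lemma Pre_sel_return_pmf:
  "Pre_sel G v x (return_pmf b) s = (\<Sum>t\<in>UNIV. v t * pmf (bind_pmf x (\<lambda>a. trans G s a b)) t)"
proof -
  have "Pre_sel G v x (return_pmf b) s = (\<Sum>a\<in>UNIV. \<Sum>t\<in>UNIV. v t * pmf (trans G s a b) t * pmf x a)"
    unfolding Pre_sel_def by (simp add: pmf_return indicator_def if_distrib sum.delta cong: if_cong)
  also have "\<dots> = (\<Sum>t\<in>UNIV. v t * pmf (bind_pmf x (\<lambda>a. trans G s a b)) t)"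
    by (subst sum.swap) (simp add: pmf_bind_finite sum_distrib_left mult.assoc)
  finally show ?thesis .
qed

lemma Pre_sel_eq_average_return:
  "Pre_sel G v x1 x2 s = (\<Sum>b\<in>UNIV. Pre_sel G v x1 (return_pmf b) s * pmf x2 b)"
proof -
  have "(\<Sum>b\<in>UNIV. Pre_sel G v x1 (return_pmf b) s * pmf x2 b)
     = (\<Sum>b\<in>UNIV. \<Sum>a\<in>UNIV. \<Sum>t\<in>UNIV. v t * pmf (trans G s a b) t * pmf x1 a * pmf x2 b)"
    unfolding Pre_sel_def
    by (simp add: pmf_return indicator_def if_distrib sum.delta sum_distrib_right cong: if_cong)
  also have "\<dots> = Pre_sel G v x1 x2 s"
    unfolding Pre_sel_def by (rule sum.swap)
  finally show ?thesis by simp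
qed

lemma Pre_sel_return_pmf_bounds:
  assumes "\<And>t. 0 \<le> v t" "\<And>t. v t \<le> 1"
  shows "0 \<le> Pre_sel G v x (return_pmf b) s" "Pre_sel G v x (return_pmf b) s \<le> 1"
  unfolding Pre_sel_return_pmf
  using assms by (auto intro!: pmf_average_le pmf_average_ge)

lemma Pre1_fix_eq_Min:
  assumes "mv2 G s \<noteq> {}"
  shows "Pre1_fix G v x s = (MIN b\<in>mv2 G s. Pre_sel G v x (return_pmf b) s)"
proof -
  let ?m = "MIN b\<in>mv2 G s. Pre_sel G v x (return_pmf b) s"
  have "?m \<in> (\<lambda>b. Pre_sel G v x (return_pmf b) s) ` mv2 G s"
    by (rule Min_in) (use assms in auto)
  then obtain b0 where b0: "b0 \<in> mv2 G s" "?m = Pre_sel G v x (return_pmf b0) s"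
    by blast
  have lower: "?m \<le> Pre_sel G v x x2 s" if "x2 \<in> sel_at (mv2 G) s" for x2
  proof -
    have "?m \<le> (\<Sum>b\<in>UNIV. Pre_sel G v x (return_pmf b) s * pmf x2 b)"
      by (rule pmf_average_ge) (use that in \<open>auto simp: sel_at_def\<close>)
    then show ?thesis by (simp only: Pre_sel_eq_average_return[of G v x x2 s])
  qed
  have b0_sel: "return_pmf b0 \<in> sel_at (mv2 G) s"
    using b0(1) by (simp add: sel_at_def)
  have bdd: "bdd_below ((\<lambda>x2. Pre_sel G v x x2 s) ` sel_at (mv2 G) s)"
    using lower by (intro bdd_belowI2[where m="?m"])
  show ?thesis unfolding Pre1_fix_def
  proof (rule antisym)
    show "(INF x2\<in>sel_at (mv2 G) s. Pre_sel G v x x2 s) \<le> ?m"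
      unfolding b0(2) by (rule cINF_lower[OF bdd b0_sel])
    show "?m \<le> (INF x2\<in>sel_at (mv2 G) s. Pre_sel G v x x2 s)"
      using b0_sel lower by (intro cINF_greatest) auto
  qed
qed

lemma Pre1_fix_le_Pre_sel_return_pmf:
  "b \<in> mv2 G s \<Longrightarrow> Pre1_fix G v x s \<le> Pre_sel G v x (return_pmf b) s"
  by (subst Pre1_fix_eq_Min) auto

lemma Pre1_fix_greatest:
  assumes "mv2 G s \<noteq> {}" "\<And>b. b \<in> mv2 G s \<Longrightarrow> c \<le> Pre_sel G v x (return_pmf b) s"
  shows "c \<le> Pre1_fix G v x s"
  using assms by (simp add: Pre1_fix_eq_Min)

lemma Pre1_fix_le_Pre1:
  assumes "mv2 G s \<noteq> {}" "\<And>t. 0 \<le> v t" "\<And>t. v t \<le> 1" "x \<in> sel_at (mv1 G) s"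
  shows "Pre1_fix G v x s \<le> Pre1 G v s"
proof -
  obtain b where b: "b \<in> mv2 G s" using assms(1) by auto
  have "Pre1_fix G v y s \<le> 1" for y
    using Pre1_fix_le_Pre_sel_return_pmf[OF b, where v=v and x=y]
      Pre_sel_return_pmf_bounds(2)[of v, OF assms(2,3), where G=G and x=y and b=b and s=s] by linarith
  then show ?thesis unfolding Pre1_def
    by (intro cSUP_upper assms(4) bdd_aboveI2[where M=1])
qed

lemma continuous_on_Min:
  assumes "finite B" "B \<noteq> {}" "\<And>b. b \<in> B \<Longrightarrow> continuous_on S (g b)"
  shows "continuous_on S (\<lambda>y. MIN b\<in>B. (g b y :: real))"
  using assms
proof (induction B rule: finite_ne_induct)
  case (insert x F)
  then have "continuous_on S (\<lambda>y. min (g x y) (MIN b\<in>F. g b y))"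
    by (intro continuous_on_min) auto
  then show ?case using insert by simp
qed simp

text \<open>Identifying selectors at s with vectors in a compact simplex, on which Pre1_fix is a
  minimum of finitely many linear functions, the supremum in Pre1 is attained.\<close>

lemma Pre1_attained:
  fixes G :: "('s::finite, 'm::finite) cgs"
  assumes ne1: "mv1 G s \<noteq> {}" and ne2: "mv2 G s \<noteq> {}"
  obtains x where "x \<in> sel_at (mv1 G) s" "Pre1_fix G v x s = Pre1 G v s"
proof -
  define H where "H y = (MIN b\<in>mv2 G s. \<Sum>a\<in>UNIV. y $ a * (\<Sum>t\<in>UNIV. v t * pmf (trans G s a b) t))"
    for y :: "real^'m"
  define vec where "vec x = (\<chi> a. pmf x a)" for x :: "'m pmf"
  define S where "S = cbox 0 1 \<inter> {y::real^'m. (\<forall>a. a \<notin> mv1 G s \<longrightarrow> y $ a = 0) \<and> (\<Sum>a\<in>UNIV. y $ a) = 1}"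
  have H_vec: "Pre1_fix G v x s = H (vec x)" for x
  proof -
    have "Pre_sel G v x (return_pmf b) s = (\<Sum>a\<in>UNIV. pmf x a * (\<Sum>t\<in>UNIV. v t * pmf (trans G s a b) t))" for b
      unfolding Pre_sel_return_pmf pmf_bind_finite sum_distrib_left
      by (subst sum.swap) (simp add: mult_ac)
    then show ?thesis by (simp add: Pre1_fix_eq_Min[OF ne2] H_def vec_def)
  qed
  have vec_S: "vec x \<in> S" if "x \<in> sel_at (mv1 G) s" for x
    using that by (auto simp: S_def vec_def mem_box_cart pmf_le_1 sum_pmf_UNIV sel_at_def set_pmf_iff)
  have "closed {y::real^'m. (\<forall>a. a \<notin> mv1 G s \<longrightarrow> y $ a = 0) \<and> (\<Sum>a\<in>UNIV. y $ a) = 1}"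
    by (intro closed_Collect_conj closed_Collect_all closed_Collect_imp closed_Collect_eq
        open_Collect_const continuous_intros)
  then have "compact S" unfolding S_def by (intro compact_Int_closed compact_cbox)
  moreover obtain a0 where "a0 \<in> mv1 G s" using ne1 by auto
  then have "S \<noteq> {}" using vec_S[of "return_pmf a0"] by (auto simp: sel_at_def)
  moreover have "continuous_on S H"
    unfolding H_def by (rule continuous_on_Min) (use ne2 in \<open>auto intro!: continuous_intros\<close>)
  ultimately obtain y where y: "y \<in> S" and y_max: "\<And>z. z \<in> S \<Longrightarrow> H z \<le> H y"
    using continuous_attains_sup[of S H] by blast
  have y_nonneg: "\<And>a. 0 \<le> y $ a" and "(\<Sum>a\<in>UNIV. y $ a) = 1"
    using y by (auto simp: S_def mem_box_cart)
  then have "(\<integral>\<^sup>+a. ennreal (y $ a) \<partial>count_space UNIV) = 1"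
    by (simp add: nn_integral_count_space_finite)
  then have pmf_x: "pmf (embed_pmf (\<lambda>a. y $ a)) a = y $ a" for a
    by (rule pmf_embed_pmf[OF y_nonneg])
  define x where "x = embed_pmf (\<lambda>a. y $ a)"
  have x_sel: "x \<in> sel_at (mv1 G) s"
    using y by (auto simp: sel_at_def S_def set_pmf_iff x_def pmf_x)
  have x_max: "Pre1_fix G v x' s \<le> Pre1_fix G v x s" if "x' \<in> sel_at (mv1 G) s" for x'
    using y_max[OF vec_S[OF that]] by (simp add: H_vec vec_def x_def pmf_x vec_eq_iff)
  have "Pre1 G v s = Pre1_fix G v x s"
    unfolding Pre1_def
  proof (rule antisym)
    show "(SUP x\<in>sel_at (mv1 G) s. Pre1_fix G v x s) \<le> Pre1_fix G v x s"
      by (rule cSUP_least) (use x_sel x_max in auto)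
    show "Pre1_fix G v x s \<le> (SUP x\<in>sel_at (mv1 G) s. Pre1_fix G v x s)"
      by (rule cSUP_upper[OF x_sel]) (use x_max in \<open>auto intro!: bdd_aboveI2\<close>)
  qed
  then show ?thesis using that x_sel by simp
qed

lemma strat_uniform: "\<forall>s. Gam s \<noteq> {} \<Longrightarrow> strat Gam (\<lambda>h. pmf_of_set (Gam (last h :: 's)) :: 'm::finite pmf)"
  by (simp add: strat_def)

lemma val1_strat_le_prob_safe:
  "strat (mv2 G) \<pi>2 \<Longrightarrow> val1_strat G F \<pi>1 s \<le> prob_safe (\<lambda>t. t \<in> F) (cgs_kernel G \<pi>1 \<pi>2) s"
  unfolding val1_strat_def by (rule cINF_lower) (auto intro!: bdd_belowI2[where m=0])

context
  fixes G :: "('s::finite, 'm::finite) cgs"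
  assumes ne2: "\<forall>s. mv2 G s \<noteq> {}"
begin

lemma val1_strat_bounds: "0 \<le> val1_strat G F \<pi>1 s" "val1_strat G F \<pi>1 s \<le> 1"
proof -
  have ne: "{\<pi>2. strat (mv2 G) \<pi>2} \<noteq> {}" using strat_uniform[OF ne2] by blast
  show "0 \<le> val1_strat G F \<pi>1 s" unfolding val1_strat_def
    by (rule cINF_greatest[OF ne]) simp
  obtain \<pi>2 where "strat (mv2 G) \<pi>2" using ne by blast
  then show "val1_strat G F \<pi>1 s \<le> 1"
    using val1_strat_le_prob_safe prob_safe_le_1 order_trans by metis
qed

lemma val1_strat_approx:
  assumes "e > 0"
  obtains \<pi>2 where "strat (mv2 G) \<pi>2"
    "prob_safe (\<lambda>t. t \<in> F) (cgs_kernel G \<pi>1 \<pi>2) s < val1_strat G F \<pi>1 s + e"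
proof -
  have ne: "{\<pi>2. strat (mv2 G) \<pi>2} \<noteq> {}" using strat_uniform[OF ne2] by blast
  have "(INF \<pi>2 \<in> {\<pi>2. strat (mv2 G) \<pi>2}. prob_safe (\<lambda>t. t \<in> F) (cgs_kernel G \<pi>1 \<pi>2) s)
      < val1_strat G F \<pi>1 s + e"
    using assms by (simp add: val1_strat_def)
  then show ?thesis
    using that by (subst (asm) cINF_less_iff) (use ne in \<open>auto intro!: bdd_belowI2[where m=0]\<close>)
qed

lemma val1_strat_le_val1: "strat (mv1 G) \<pi>1 \<Longrightarrow> val1_strat G F \<pi>1 s \<le> val1 G F s"
  unfolding val1_def
  by (rule cSUP_upper) (auto intro!: bdd_aboveI2[where M=1] simp: val1_strat_bounds)

lemma val1_strat_unsafe: "s \<notin> F \<Longrightarrow> val1_strat G F \<pi>1 s = 0"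
  using val1_strat_le_prob_safe[OF strat_uniform[OF ne2]] prob_safe_unsafe[of "\<lambda>t. t \<in> F" s]
    val1_strat_bounds(1)[of F \<pi>1 s] by (metis order_antisym)

lemma val1_strat_absorbing:
  assumes "s \<in> F" "absorbing G s" "selector (mv1 G) \<gamma>"
  shows "vals G F \<gamma> s = 1"
proof -
  have "prob_safe (\<lambda>t. t \<in> F) (cgs_kernel G (memoryless \<gamma>) \<pi>2) s = 1"
    if \<pi>2: "strat (mv2 G) \<pi>2" for \<pi>2
  proof (rule prob_safe_invariant[where S="{s}"])
    fix h :: "'s list" assume h: "h \<noteq> []" "last h \<in> {s}"
    have "trans G s a b = return_pmf s" if "a \<in> set_pmf (\<gamma> s)" "b \<in> set_pmf (\<pi>2 h)" for a b
    proof -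
      have "a \<in> mv1 G s" using that(1) assms(3) by (auto simp: selector_def)
      moreover have "b \<in> mv2 G s" using that(2) \<pi>2 h by (auto simp: strat_def)
      ultimately show ?thesis using assms(2) by (simp add: absorbing_def)
    qed
    then show "set_pmf (cgs_kernel G (memoryless \<gamma>) \<pi>2 h) \<subseteq> {s}"
      using h by (auto simp: cgs_kernel_def memoryless_def)
  qed (use assms(1) in auto)
  then show ?thesis
    unfolding val1_strat_def using strat_uniform[OF ne2]
    by (subst INF_cong[OF refl]) (auto intro: cINF_const)
qed

context
  assumes ne1: "\<forall>s. mv1 G s \<noteq> {}"
begin

lemma val1_bounds: "0 \<le> val1 G F s" "val1 G F s \<le> 1"
proof -
  have ne: "{\<pi>1. strat (mv1 G) \<pi>1} \<noteq> {}" using strat_uniform[OF ne1] by blast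
  then show "val1 G F s \<le> 1" unfolding val1_def
    by (intro cSUP_least) (auto simp: val1_strat_bounds)
  from ne obtain \<pi>1 where "strat (mv1 G) \<pi>1" by blast
  then show "0 \<le> val1 G F s"
    using val1_strat_le_val1 val1_strat_bounds(1) order_trans by metis
qed

lemma val1_unsafe: "s \<notin> F \<Longrightarrow> val1 G F s = 0"
proof -
  assume "s \<notin> F"
  then have "val1 G F s \<le> 0" unfolding val1_def
    using strat_uniform[OF ne1] by (intro cSUP_least) (auto simp: val1_strat_unsafe)
  then show ?thesis using val1_bounds(1)[of F s] by linarith
qed

end

end

section \<open>The value is a pre-fixpoint of Pre1\<close>

lemma strat_after_first_move:
  assumes "strat M d" "b \<in> M s" "\<And>t. strat M (\<sigma> t)"
  shows "strat M (\<lambda>h. case h of [x] \<Rightarrow> if x = s then return_pmf b else d h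
                                | x # t # g \<Rightarrow> \<sigma> t (t # g) | [] \<Rightarrow> d h)"
  unfolding strat_def
proof (intro allI impI)
  fix h :: "'a list" assume "h \<noteq> []"
  have d: "set_pmf (d h) \<subseteq> M (last h)"
    using assms(1) \<open>h \<noteq> []\<close> unfolding strat_def by blast
  have \<sigma>: "set_pmf (\<sigma> t (t # g)) \<subseteq> M (last (t # g))" for t g
    using assms(3)[of t] unfolding strat_def by blast
  from \<open>h \<noteq> []\<close> consider x where "h = [x]" | x t g where "h = x # t # g"
    by (metis list.exhaust)
  then show "set_pmf (case h of [x] \<Rightarrow> if x = s then return_pmf b else d h
                     | x # t # g \<Rightarrow> \<sigma> t (t # g) | [] \<Rightarrow> d h) \<subseteq> M (last h)"
    by cases (use assms(2) d \<sigma> in auto)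
qed

text \<open>Player 2 answers the first move of \<pi>1 with b and then plays an almost optimal counter
  strategy from the successor state; \<pi>1 continues with its shifted histories.\<close>

lemma val1_strat_le_Pre_sel_val1:
  fixes G :: "('s::finite, 'm::finite) cgs"
  assumes ne2: "\<forall>s. mv2 G s \<noteq> {}" and \<pi>1: "strat (mv1 G) \<pi>1" and b: "b \<in> mv2 G s"
    and e: "e > 0"
  shows "val1_strat G F \<pi>1 s \<le> Pre_sel G (val1 G F) (\<pi>1 [s]) (return_pmf b) s + e"
proof -
  define \<sigma>1 where "\<sigma>1 h = \<pi>1 (s # h)" for h
  have \<sigma>1: "strat (mv1 G) \<sigma>1"
    using \<pi>1 unfolding strat_def \<sigma>1_def by (metis last_ConsR list.distinct(1))
  have "\<forall>t. \<exists>\<pi>2. strat (mv2 G) \<pi>2 \<and>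
      prob_safe (\<lambda>u. u \<in> F) (cgs_kernel G \<sigma>1 \<pi>2) t < val1_strat G F \<sigma>1 t + e"
    using val1_strat_approx[OF ne2 e] by metis
  then obtain \<sigma>2 where \<sigma>2: "\<forall>t. strat (mv2 G) (\<sigma>2 t) \<and>
      prob_safe (\<lambda>u. u \<in> F) (cgs_kernel G \<sigma>1 (\<sigma>2 t)) t < val1_strat G F \<sigma>1 t + e"
    by (metis choice)
  define \<pi>2 where "\<pi>2 = (\<lambda>h. case h of
      [x] \<Rightarrow> if x = s then return_pmf b else pmf_of_set (mv2 G (last h))
    | x # t # g \<Rightarrow> \<sigma>2 t (t # g) | [] \<Rightarrow> pmf_of_set (mv2 G (last h)))"
  have "strat (mv2 G) \<pi>2"
    unfolding \<pi>2_def by (rule strat_after_first_move[OF strat_uniform[OF ne2] b]) (use \<sigma>2 in blast)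
  then have "val1_strat G F \<pi>1 s \<le> prob_safe (\<lambda>u. u \<in> F) (cgs_kernel G \<pi>1 \<pi>2) s"
    by (rule val1_strat_le_prob_safe)
  also have "\<dots> \<le> (\<Sum>t\<in>UNIV. prob_safe (\<lambda>u. u \<in> F) (cgs_kernel G \<sigma>1 (\<sigma>2 t)) t
                             * pmf (bind_pmf (\<pi>1 [s]) (\<lambda>a. trans G s a b)) t)"
    using prob_safe_first_step_le[of "cgs_kernel G \<pi>1 \<pi>2" s "\<lambda>t. cgs_kernel G \<sigma>1 (\<sigma>2 t)"]
    by (simp add: cgs_kernel_def \<pi>2_def \<sigma>1_def bind_return_pmf)
  also have "\<dots> \<le> (\<Sum>t\<in>UNIV. (val1 G F t + e) * pmf (bind_pmf (\<pi>1 [s]) (\<lambda>a. trans G s a b)) t)"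
  proof (rule sum_mono)
    fix t
    have "prob_safe (\<lambda>u. u \<in> F) (cgs_kernel G \<sigma>1 (\<sigma>2 t)) t < val1_strat G F \<sigma>1 t + e"
      using \<sigma>2 by blast
    moreover have "val1_strat G F \<sigma>1 t \<le> val1 G F t"
      by (rule val1_strat_le_val1[OF ne2 \<sigma>1])
    ultimately show "prob_safe (\<lambda>u. u \<in> F) (cgs_kernel G \<sigma>1 (\<sigma>2 t)) t
        * pmf (bind_pmf (\<pi>1 [s]) (\<lambda>a. trans G s a b)) t
      \<le> (val1 G F t + e) * pmf (bind_pmf (\<pi>1 [s]) (\<lambda>a. trans G s a b)) t"
      by (intro mult_right_mono) auto
  qed
  also have "\<dots> = Pre_sel G (val1 G F) (\<pi>1 [s]) (return_pmf b) s + e"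
    by (simp add: Pre_sel_return_pmf distrib_right sum.distrib sum_distrib_left[symmetric] sum_pmf_UNIV)
  finally show ?thesis .
qed

lemma val1_le_Pre1_val1:
  fixes G :: "('s::finite, 'm::finite) cgs"
  assumes ne1: "\<forall>s. mv1 G s \<noteq> {}" and ne2: "\<forall>s. mv2 G s \<noteq> {}"
  shows "val1 G F s \<le> Pre1 G (val1 G F) s"
proof (rule field_le_epsilon)
  fix e :: real assume e: "0 < e"
  show "val1 G F s \<le> Pre1 G (val1 G F) s + e" unfolding val1_def[of G F s]
  proof (rule cSUP_least)
    show "{\<pi>1. strat (mv1 G) \<pi>1} \<noteq> {}" using strat_uniform[OF ne1] by blast
    fix \<pi>1 assume "\<pi>1 \<in> {\<pi>1. strat (mv1 G) \<pi>1}"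
    then have \<pi>1: "strat (mv1 G) \<pi>1" by simp
    have "val1_strat G F \<pi>1 s - e \<le> Pre1_fix G (val1 G F) (\<pi>1 [s]) s"
      using ne2 val1_strat_le_Pre_sel_val1[OF ne2 \<pi>1 _ e]
      by (intro Pre1_fix_greatest) (auto simp: algebra_simps)
    moreover have "\<pi>1 [s] \<in> sel_at (mv1 G) s"
      using \<pi>1 unfolding strat_def sel_at_def by (metis last_ConsL list.distinct(1) mem_Collect_eq)
    then have "Pre1_fix G (val1 G F) (\<pi>1 [s]) s \<le> Pre1 G (val1 G F) s"
      using ne2 val1_bounds[OF ne2 ne1] by (intro Pre1_fix_le_Pre1) auto
    ultimately show "val1_strat G F \<pi>1 s \<le> Pre1 G (val1 G F) s + e" by linarith
  qed
qed

section \<open>The turn-based reduction\<close>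

definition selector_tb_strategy ::
    "('s::finite, 'm::finite) cgs \<Rightarrow> ('s \<Rightarrow> real) \<Rightarrow> ('s \<Rightarrow> 'm pmf) \<Rightarrow> ('s, 'm) tbst list \<Rightarrow> ('s, 'm) tbst pmf"
  where "selector_tb_strategy G v \<xi> h = return_pmf
    (case last h of TB1 u \<Rightarrow> TB2 u (set_pmf (\<xi> u)) (CountOpt G v u (\<xi> u)) | q \<Rightarrow> q)"

lemma OptSel_in_OptSelCount:
  "x \<in> OptSel G v u \<Longrightarrow> (set_pmf x, CountOpt G v u x) \<in> OptSelCount G v u"
  by (auto simp: OptSelCount_def OptSel_def sel_at_def CountOpt_def)

lemma tb_strat1_selector_tb_strategy:
  assumes "\<And>u. \<xi> u \<in> OptSel G v u"
  shows "tb_strat1 G v (selector_tb_strategy G v \<xi>)"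
  unfolding tb_strat1_def is_p1_def
  using OptSel_in_OptSelCount[OF assms] by (auto simp: selector_tb_strategy_def)

lemma TB1_in_tb_as_win:
  fixes G :: "('s::finite, 'm::finite) cgs"
  assumes opt: "\<And>u. \<xi> u \<in> OptSel G v u" and "Z \<subseteq> F"
    and closed: "\<And>u a b t. u \<in> Z \<Longrightarrow> a \<in> set_pmf (\<xi> u) \<Longrightarrow> b \<in> CountOpt G v u (\<xi> u)
                   \<Longrightarrow> t \<in> Dest G u a b \<Longrightarrow> t \<in> Z"
    and "s \<in> Z"
  shows "TB1 s \<in> tb_as_win G v F"
proof -
  define A where "A u = set_pmf (\<xi> u)" for u
  define B where "B u = CountOpt G v u (\<xi> u)" for u
  define Q where "Q = TB1 ` Z \<union> (\<lambda>u. TB2 u (A u) (B u)) ` Z \<union> {TBR u (A u) b | u b. u \<in> Z \<and> b \<in> B u}"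
  have "prob_safe (tb_safe F) (tb_kernel G v (selector_tb_strategy G v \<xi>) \<pi>2) (TB1 s) = 1"
    if \<pi>2: "tb_strat2 G v \<pi>2" for \<pi>2
  proof (rule prob_safe_invariant[where S=Q])
    fix h :: "('s, 'm) tbst list" assume h: "h \<noteq> []" "last h \<in> Q"
    then consider (p1) u where "u \<in> Z" "last h = TB1 u"
      | (p2) u where "u \<in> Z" "last h = TB2 u (A u) (B u)"
      | (random) u b where "u \<in> Z" "b \<in> B u" "last h = TBR u (A u) b"
      unfolding Q_def by blast
    then show "set_pmf (tb_kernel G v (selector_tb_strategy G v \<xi>) \<pi>2 h) \<subseteq> Q"
    proof cases
      case p1
      then show ?thesis
        by (auto simp: tb_kernel_def selector_tb_strategy_def Q_def A_def B_def)
    next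
      case p2
      then have "last h \<in> tb_states G v"
        using OptSel_in_OptSelCount[OF opt] by (auto simp: tb_states_def A_def B_def)
      then have "set_pmf (\<pi>2 h) \<subseteq> tb_succ G v (last h)"
        using \<pi>2 h(1) p2(2) unfolding tb_strat2_def is_p2_def by blast
      then show ?thesis
        using p2 by (auto simp: tb_kernel_def Q_def)
    next
      case random
      have "A u \<noteq> {}" "\<And>a. Dest G u a b \<noteq> {}"
        by (simp_all add: A_def Dest_def set_pmf_not_empty)
      then have "set_pmf (tb_kernel G v (selector_tb_strategy G v \<xi>) \<pi>2 h)
          = TB1 ` (\<Union>a\<in>A u. Dest G u a b)"
        using random(3) by (simp add: tb_kernel_def)
      then show ?thesis
        using closed[OF random(1) _ random(2)[unfolded B_def]] by (auto simp: Q_def A_def)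
    qed
  qed (use \<open>Z \<subseteq> F\<close> \<open>s \<in> Z\<close> in \<open>auto simp: Q_def tb_safe_def\<close>)
  then show ?thesis
    using tb_strat1_selector_tb_strategy[OF opt] by (auto simp: tb_as_win_def tb_states_def)
qed

lemma strat_memoryless: "selector Gam \<gamma> \<Longrightarrow> strat Gam (memoryless \<gamma>)"
  by (simp add: selector_def strat_def memoryless_def)

lemma selector_alg_step:
  fixes G :: "('s::finite, 'm::finite) cgs"
  assumes sel: "selector (mv1 G) \<gamma>" and step: "alg_step G F \<gamma> \<gamma>'"
  shows "selector (mv1 G) \<gamma>'"
  using step unfolding alg_step_def Let_def
proof (elim disjE conjE exE)
  fix \<xi> assume "selector (mv1 G) \<xi>" "\<gamma>' = (\<lambda>s. if s \<in> Iset G F \<gamma> then \<xi> s else \<gamma> s)"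
  then show ?thesis using sel by (simp add: selector_def)
next
  fix \<pi>b :: "('s, 'm) tbst \<Rightarrow> ('s, 'm) tbst"
  let ?v = "vals G F \<gamma>"
  assume succ: "\<forall>s. \<pi>b (TB1 s) \<in> tb_succ G ?v (TB1 s)"
    and keep: "\<forall>s. s \<notin> Uset G F \<gamma> \<longrightarrow> \<gamma>' s = \<gamma> s"
    and switch: "\<forall>s\<in>Uset G F \<gamma>. \<forall>A B. \<pi>b (TB1 s) = TB2 s A B \<longrightarrow>
      \<gamma>' s \<in> OptSel G ?v s \<and> set_pmf (\<gamma>' s) = A \<and> CountOpt G ?v s (\<gamma>' s) = B"
  have "set_pmf (\<gamma>' s) \<subseteq> mv1 G s" for s
  proof (cases "s \<in> Uset G F \<gamma>")
    case True
    obtain A B where "\<pi>b (TB1 s) = TB2 s A B" using succ[rule_format, of s] by auto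
    then show ?thesis using switch True by (auto simp: OptSel_def sel_at_def)
  next
    case False
    then show ?thesis using keep sel by (simp add: selector_def)
  qed
  then show ?thesis by (simp add: selector_def)
qed

lemma selector_alg_iter:
  assumes "alg_iter G F i \<gamma>" "\<forall>s. mv1 G s \<noteq> {}"
  shows "selector (mv1 G) \<gamma>"
  using assms(1)
proof (induction rule: alg_iter.induct)
  case init
  then show ?case using assms(2) by (simp add: selector_def unif_sel_def)
next
  case (step i \<gamma> \<gamma>')
  then show ?case using selector_alg_step by blast
qed

section \<open>Optimality at a stable strategy\<close>

lemma Pre_sel_return_pmf_diff:
  "Pre_sel G w x (return_pmf b) s - Pre_sel G v x (return_pmf b) s
    = (\<Sum>t\<in>UNIV. (w t - v t) * pmf (bind_pmf x (\<lambda>a. trans G s a b)) t)"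
  by (simp add: Pre_sel_return_pmf sum_subtractf[symmetric] left_diff_distrib)

text \<open>The gap averaged over the successors under x and b is at most its maximum c; this
  forces equality at u, and hence the maximal gap at every successor.\<close>

lemma max_gap_selector:
  fixes G :: "('s::finite, 'm::finite) cgs"
  assumes "mv2 G u \<noteq> {}" "\<And>t. 0 \<le> v t" "\<And>t. v t \<le> 1"
    and gap: "\<And>t. w t - v t \<le> c" "w u - v u = c"
    and stable: "Pre1 G v u \<le> v u"
    and x: "x \<in> sel_at (mv1 G) u" "w u \<le> Pre1_fix G w x u"
  shows "x \<in> OptSel G v u"
    and "\<And>a b t. a \<in> set_pmf x \<Longrightarrow> b \<in> CountOpt G v u x \<Longrightarrow> t \<in> Dest G u a b \<Longrightarrow> w t - v t = c"
proof -
  have w_le: "w u \<le> Pre_sel G w x (return_pmf b) u" if "b \<in> mv2 G u" for b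
    using x(2) Pre1_fix_le_Pre_sel_return_pmf[OF that, of w x] by linarith
  have diff_le: "Pre_sel G w x (return_pmf b) u - Pre_sel G v x (return_pmf b) u \<le> c" for b
    unfolding Pre_sel_return_pmf_diff by (rule pmf_average_le) (rule gap(1))
  have "Pre1 G v u \<le> Pre_sel G v x (return_pmf b) u" if "b \<in> mv2 G u" for b
    using w_le[OF that] diff_le[of b] gap(2) stable by linarith
  then have "Pre1 G v u \<le> Pre1_fix G v x u"
    by (rule Pre1_fix_greatest[OF assms(1)])
  moreover have "Pre1_fix G v x u \<le> Pre1 G v u"
    by (rule Pre1_fix_le_Pre1) (use assms x in auto)
  ultimately show "x \<in> OptSel G v u"
    using x(1) by (simp add: OptSel_def)
  fix a b t assume a: "a \<in> set_pmf x" and b: "b \<in> CountOpt G v u x" and t: "t \<in> Dest G u a b"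
  have "c \<le> Pre_sel G w x (return_pmf b) u - Pre_sel G v x (return_pmf b) u"
    using w_le[of b] b gap(2) stable by (auto simp: CountOpt_def)
  moreover have "t \<in> set_pmf (bind_pmf x (\<lambda>a. trans G u a b))"
    using a t by (auto simp: Dest_def)
  ultimately show "w t - v t = c"
    unfolding Pre_sel_return_pmf_diff by (intro pmf_average_eq_bound[OF gap(1)])
qed

lemma max_gap_closed_selector:
  fixes G :: "('s::finite, 'm::finite) cgs"
  assumes ne1: "\<forall>s. mv1 G s \<noteq> {}" and ne2: "\<forall>s. mv2 G s \<noteq> {}"
    and "\<And>t. 0 \<le> v t" "\<And>t. v t \<le> 1" and w: "\<And>u. w u \<le> Pre1 G w u"
    and gap: "\<And>t. w t - v t \<le> c"
    and stable: "\<And>u. w u - v u = c \<Longrightarrow> Pre1 G v u \<le> v u"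
  shows "\<exists>\<xi>. \<forall>u. \<xi> u \<in> OptSel G v u \<and> (w u - v u = c \<longrightarrow>
      (\<forall>a b t. a \<in> set_pmf (\<xi> u) \<longrightarrow> b \<in> CountOpt G v u (\<xi> u) \<longrightarrow> t \<in> Dest G u a b \<longrightarrow> w t - v t = c))"
proof -
  have selector_at: "\<exists>x. x \<in> OptSel G v u \<and> (w u - v u = c \<longrightarrow>
      (\<forall>a b t. a \<in> set_pmf x \<longrightarrow> b \<in> CountOpt G v u x \<longrightarrow> t \<in> Dest G u a b \<longrightarrow> w t - v t = c))"
    for u
  proof (cases "w u - v u = c")
    case True
    obtain x where x: "x \<in> sel_at (mv1 G) u" "Pre1_fix G w x u = Pre1 G w u"
      using Pre1_attained[of G u w] ne1 ne2 by blast
    then have "w u \<le> Pre1_fix G w x u" using w[of u] by simp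
    note max_gap_selector[OF _ assms(3,4) gap True stable[OF True] x(1) this]
    then show ?thesis using ne2 by blast
  next
    case False
    obtain x where "x \<in> sel_at (mv1 G) u" "Pre1_fix G v x u = Pre1 G v u"
      using Pre1_attained[of G u v] ne1 ne2 by blast
    then show ?thesis using False by (auto simp: OptSel_def)
  qed
  show ?thesis by (intro choice allI) (rule selector_at)
qed

lemma vals_eq_val1_off_F_minus_W1:
  fixes G :: "('s::finite, 'm::finite) cgs"
  assumes ne1: "\<forall>s. mv1 G s \<noteq> {}" and ne2: "\<forall>s. mv2 G s \<noteq> {}"
    and absorbing: "\<forall>s\<in>W1 G F. absorbing G s" and sel: "selector (mv1 G) \<gamma>"
    and "s \<notin> F - W1 G F"
  shows "vals G F \<gamma> s = val1 G F s"
proof (cases "s \<in> F")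
  case True
  with assms(5) have "s \<in> W1 G F" by blast
  then show ?thesis
    using val1_strat_absorbing[OF ne2 True _ sel] absorbing by (simp add: W1_def)
next
  case False
  then show ?thesis by (simp add: val1_strat_unsafe[OF ne2] val1_unsafe[OF ne2 ne1])
qed

lemma vals_eq_val1_if_no_improvement:
  fixes G :: "('s::finite, 'm::finite) cgs"
  assumes ne1: "\<forall>s. mv1 G s \<noteq> {}" and ne2: "\<forall>s. mv2 G s \<noteq> {}"
    and absorbing: "\<forall>s\<in>W1 G F. absorbing G s" and sel: "selector (mv1 G) \<gamma>"
    and no_I: "Iset G F \<gamma> = {}" and no_U: "Uset G F \<gamma> = {}"
  shows "vals G F \<gamma> = val1 G F"
proof -
  define v where "v = vals G F \<gamma>"
  define w where "w = val1 G F"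
  have v_le_w: "v t \<le> w t" for t
    unfolding v_def w_def by (rule val1_strat_le_val1[OF ne2 strat_memoryless[OF sel]])
  have "w t \<le> v t" for t
  proof (rule ccontr)
    assume "\<not> w t \<le> v t"
    define c where "c = Max (range (\<lambda>u. w u - v u))"
    have gap: "w u - v u \<le> c" for u
      unfolding c_def by (rule Max_ge) auto
    have "c \<in> range (\<lambda>u. w u - v u)"
      unfolding c_def by (rule Max_in) auto
    then obtain s0 where s0: "w s0 - v s0 = c" by auto
    have "0 < c" using gap[of t] \<open>\<not> w t \<le> v t\<close> by linarith
    have max_F_W1: "u \<in> F - W1 G F" if "w u - v u = c" for u
    proof (rule ccontr)
      assume "u \<notin> F - W1 G F"
      then have "v u = w u"
        unfolding v_def w_def by (intro vals_eq_val1_off_F_minus_W1[OF ne1 ne2 absorbing sel]) blast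
      then show False using that \<open>0 < c\<close> by simp
    qed
    have stable: "Pre1 G v u \<le> v u" if "w u - v u = c" for u
      using no_I max_F_W1[OF that] by (auto simp: Iset_def v_def)
    have v_bounds: "\<And>t. 0 \<le> v t" "\<And>t. v t \<le> 1"
      unfolding v_def by (simp_all add: val1_strat_bounds[OF ne2])
    have w_le_Pre1: "\<And>u. w u \<le> Pre1 G w u"
      unfolding w_def by (rule val1_le_Pre1_val1[OF ne1 ne2])
    obtain \<xi> where \<xi>: "\<forall>u. \<xi> u \<in> OptSel G v u \<and> (w u - v u = c \<longrightarrow>
        (\<forall>a b t. a \<in> set_pmf (\<xi> u) \<longrightarrow> b \<in> CountOpt G v u (\<xi> u) \<longrightarrow> t \<in> Dest G u a b
          \<longrightarrow> w t - v t = c))"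
      using max_gap_closed_selector[OF ne1 ne2 v_bounds w_le_Pre1 gap stable] by blast
    let ?Z = "{u. w u - v u = c}"
    have "TB1 s0 \<in> tb_as_win G v F"
    proof (rule TB1_in_tb_as_win[where Z="?Z"])
      show "\<xi> u \<in> OptSel G v u" for u using \<xi> by blast
      show "t \<in> ?Z" if "u \<in> ?Z" "a \<in> set_pmf (\<xi> u)" "b \<in> CountOpt G v u (\<xi> u)" "t \<in> Dest G u a b"
        for u a b t
        using \<xi> that by simp
      show "?Z \<subseteq> F" "s0 \<in> ?Z" using max_F_W1 s0 by auto
    qed
    then have "s0 \<in> Uset G F \<gamma>"
      using max_F_W1[OF s0] by (simp add: Uset_def v_def)
    with no_U show False by simp
  qed
  with v_le_w show ?thesis
    unfolding v_def w_def by (intro ext antisym)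
qed

theorem theorem7:
  fixes G :: "('s::finite, 'm::finite) cgs" and F :: "'s set"
    and i :: nat and \<gamma> :: "'s \<Rightarrow> 'm pmf"
  assumes "\<forall>s. mv1 G s \<noteq> {}"
    and "\<forall>s. mv2 G s \<noteq> {}"
    and "\<forall>s\<in>W1 G F \<union> (- F). absorbing G s"
    and "alg_iter G F i \<gamma>"
    and "Iset G F \<gamma> = {}"
    and "Uset G F \<gamma> = {}"
  shows "optimal1 G F (memoryless \<gamma>) \<and> val1_strat G F (memoryless \<gamma>) = val1 G F"
proof -
  have sel: "selector (mv1 G) \<gamma>"
    using assms(4,1) by (rule selector_alg_iter)
  have "vals G F \<gamma> = val1 G F"
    using assms(3) by (intro vals_eq_val1_if_no_improvement[OF assms(1,2) _ sel assms(5,6)]) blast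
  then show ?thesis
    using strat_memoryless[OF sel] by (simp add: optimal1_def)
qed

end
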